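(* Let $P\in\mathbb{R}^{n\times n}$ be a symmetric matrix with $\operatorname{rank}(P)=K$. Suppose $V\in\mathbb{R}^{n\times K}$ satisfies the following three conditions: (i) (Eigenbasis) $V$ is a basis of the column space of $P$, i.e. $V$ has full column rank $K$ and $P=VU^\top$ for some $U\in\mathbb{R}^{n\times K}$; (ii) (Non-negativity) $V_{ik}\ge 0$ for all $i\in[n]$, $k\in[K]$; (iii) (Pure rows) for each $k=1,\dots,K$ there is a row index $i_k$ with $V_{i_k k}>0$ and $V_{i_k j}=0$ for all $j\neq k$. If $\widetilde V\in\mathbb{R}^{n\times K}$ also satisfies (i)–(iii) (with the same $P$), then there exists a permutation matrix $Q\in\{0,1\}^{K\times K}$ such that $\operatorname{supp}(V)=\operatorname{supp}(\widetilde V Q)$.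
   Context: For a matrix $M$, $\operatorname{supp}(M)=\{(i,j): M_{ij}\neq 0\}$ denotes the set of its non-zero entries. $[n]=\{1,\dots,n\}$. *)

theory Defs
  imports "HOL-Analysis.Analysis"
begin

definition supp_mat :: "real^'m^'n \<Rightarrow> ('n \<times> 'm) set" where
  "supp_mat M = {(i, j). M $ i $ j \<noteq> 0}"

definition permutation_matrix :: "real^'k^'k \<Rightarrow> bool" where
  "permutation_matrix Q \<longleftrightarrow>
     (\<forall>i j. Q $ i $ j = 0 \<or> Q $ i $ j = 1) \<and>
     (\<forall>i. \<exists>!j. Q $ i $ j = 1) \<and>
     (\<forall>j. \<exists>!i. Q $ i $ j = 1)"

definition admissible_basis :: "real^'n^'n \<Rightarrow> real^'k^'n \<Rightarrow> bool" where
  "admissible_basis P V \<longleftrightarrow>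
     rank V = CARD('k) \<and> (\<exists>U :: real^'k^'n. P = V ** transpose U) \<and>
     (\<forall>i k. V $ i $ k \<ge> 0) \<and>
     (\<forall>k. \<exists>i. V $ i $ k > 0 \<and> (\<forall>j. j \<noteq> k \<longrightarrow> V $ i $ j = 0))"

end

theory Submission
  imports Defs
begin

text \<open>Both V and Vt span the column space of P, which has dimension K, so Vt = V A and
  V = Vt B for square matrices A, B. A pure row of V reads off a row of V X as a positive
  multiple of the corresponding row of X; hence V B A = V forces B A = 1, and the
  non-negativity of Vt = V A forces A \<ge> 0 (likewise A B = 1, B \<ge> 0). A pair of mutually
  inverse non-negative matrices has exactly one non-zero entry in each row and column, so
  V = Vt B has the support of Vt Q, where Q is the zero pattern of B.\<close>

definition nonneg_mat :: "real^'m^'n \<Rightarrow> bool" where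
  "nonneg_mat M \<longleftrightarrow> (\<forall>i j. M $ i $ j \<ge> 0)"

definition pure_rows :: "real^'k^'n \<Rightarrow> bool" where
  "pure_rows V \<longleftrightarrow> (\<forall>k. \<exists>i. V $ i $ k > 0 \<and> (\<forall>j. j \<noteq> k \<longrightarrow> V $ i $ j = 0))"

lemma admissible_basis_nonneg_mat: "admissible_basis P V \<Longrightarrow> nonneg_mat V"
  by (simp add: admissible_basis_def nonneg_mat_def)

lemma admissible_basis_pure_rows: "admissible_basis P V \<Longrightarrow> pure_rows V"
  by (simp add: admissible_basis_def pure_rows_def)

lemma nonneg_mat_transpose: "nonneg_mat M \<Longrightarrow> nonneg_mat (transpose M)"
  by (simp add: nonneg_mat_def transpose_def)

lemma matrix_mult_entry: "((A::real^'k^'n) ** B) $ i $ j = (\<Sum>k\<in>UNIV. A $ i $ k * B $ k $ j)"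
  by (simp add: matrix_matrix_mult_def)

lemma nonneg_mat_mult_entry_nonzero_iff:
  fixes X :: "real^'k^'n" and Y :: "real^'m^'k"
  assumes "nonneg_mat X" "nonneg_mat Y"
  shows "(X ** Y) $ i $ j \<noteq> 0 \<longleftrightarrow> (\<exists>k. X $ i $ k \<noteq> 0 \<and> Y $ k $ j \<noteq> 0)"
  using sum_nonneg_eq_0_iff[of UNIV "\<lambda>k. X $ i $ k * Y $ k $ j"] assms
  by (simp add: matrix_mult_entry nonneg_mat_def)

lemma supp_mat_mult_nonneg_cong:
  fixes X :: "real^'k^'n" and Y Y' :: "real^'m^'k"
  assumes "nonneg_mat X" "nonneg_mat Y" "nonneg_mat Y'"
    and "\<And>k j. Y $ k $ j \<noteq> 0 \<longleftrightarrow> Y' $ k $ j \<noteq> 0"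
  shows "supp_mat (X ** Y) = supp_mat (X ** Y')"
  using assms by (simp add: supp_mat_def nonneg_mat_mult_entry_nonzero_iff)

lemma nonneg_inverse_row_unique_nonzero:
  fixes A B :: "real^'k^'k"
  assumes "nonneg_mat A" "nonneg_mat B" "A ** B = mat 1" "B ** A = mat 1"
  shows "\<exists>!k. A $ i $ k \<noteq> 0"
proof -
  have "(A ** B) $ i $ i \<noteq> 0" using assms(3) by (simp add: mat_def)
  then obtain k where k: "A $ i $ k \<noteq> 0" "B $ k $ i \<noteq> 0"
    using nonneg_mat_mult_entry_nonzero_iff[OF assms(1,2)] by blast
  show ?thesis
  proof (rule ex1I[of _ k])
    fix k' assume "A $ i $ k' \<noteq> 0"
    with k(2) have "(B ** A) $ k $ k' \<noteq> 0"
      using nonneg_mat_mult_entry_nonzero_iff[OF assms(2,1)] by blast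
    with assms(4) show "k' = k" by (simp add: mat_def split: if_splits)
  qed (fact k(1))
qed

lemma nonneg_inverse_column_unique_nonzero:
  fixes A B :: "real^'k^'k"
  assumes "nonneg_mat A" "nonneg_mat B" "A ** B = mat 1" "B ** A = mat 1"
  shows "\<exists>!i. A $ i $ k \<noteq> 0"
proof -
  have "transpose A ** transpose B = mat 1" "transpose B ** transpose A = mat 1"
    using assms(3,4) by (metis matrix_transpose_mul transpose_mat)+
  from nonneg_inverse_row_unique_nonzero[OF assms(1,2)[THEN nonneg_mat_transpose] this]
  show ?thesis by (simp add: transpose_def)
qed

lemma admissible_basis_column_space:
  fixes P :: "real^'n^'n" and V :: "real^'k^'n"
  assumes "rank P = CARD('k)" "admissible_basis P V"
  shows "range ((*v) V) = range ((*v) P)"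
proof -
  obtain U :: "real^'k^'n" where U: "P = V ** transpose U" and rank_V: "rank V = CARD('k)"
    using assms(2) unfolding admissible_basis_def by blast
  have "range ((*v) P) \<subseteq> range ((*v) V)"
    using U by (auto simp: matrix_vector_mul_assoc[symmetric])
  moreover have "subspace (range ((*v) P))" "subspace (range ((*v) V))"
    by (auto intro!: linear_subspace_image[OF matrix_vector_mul_linear] subspace_UNIV)
  ultimately show ?thesis
    using subspace_dim_equal[of "range ((*v) P)" "range ((*v) V)"] assms(1) rank_V
    by (simp add: rank_dim_range)
qed

lemma matrix_factor_through_column_space:
  fixes V W :: "real^'k^'n"
  assumes "range ((*v) W) \<subseteq> range ((*v) V)"
  shows "\<exists>A. W = V ** A"
proof -
  have "\<forall>k. \<exists>x. W *v axis k 1 = V *v x" using assms by blast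
  then obtain x where x: "\<And>k. W *v axis k 1 = V *v x k" by metis
  have "W $ r $ k = (V ** (\<chi> i k. x k $ i)) $ r $ k" for r k
  proof -
    have "W $ r $ k = (W *v axis k 1) $ r"
      by (simp add: matrix_vector_mult_basis column_def)
    also have "\<dots> = (V *v x k) $ r" by (simp only: x)
    also have "\<dots> = (V ** (\<chi> i k. x k $ i)) $ r $ k"
      by (simp add: matrix_vector_mult_def matrix_mult_entry)
    finally show ?thesis .
  qed
  then show ?thesis by (auto simp: vec_eq_iff)
qed

lemma matrix_mult_entry_pure_row:
  fixes V :: "real^'k^'n" and C :: "real^'m^'k"
  assumes "\<forall>j. j \<noteq> k \<longrightarrow> V $ i $ j = 0"
  shows "(V ** C) $ i $ j = V $ i $ k * C $ k $ j"
  unfolding matrix_mult_entry by (rule sum.remove[where x=k, THEN trans]) (use assms in auto)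

lemma pure_rows_mult_eq_self:
  fixes V :: "real^'k^'n" and C :: "real^'k^'k"
  assumes "pure_rows V" "V ** C = V"
  shows "C = mat 1"
proof -
  have "C $ k $ j = mat 1 $ k $ j" for k j
  proof -
    obtain i where i: "V $ i $ k > 0" "\<forall>j. j \<noteq> k \<longrightarrow> V $ i $ j = 0"
      using assms(1) unfolding pure_rows_def by blast
    have "V $ i $ k * C $ k $ j = V $ i $ j"
      using matrix_mult_entry_pure_row[OF i(2), of C j] assms(2) by simp
    with i show ?thesis by (cases "j = k") (auto simp: mat_def)
  qed
  then show ?thesis by (simp add: vec_eq_iff)
qed

lemma pure_rows_mult_nonneg:
  fixes V :: "real^'k^'n" and A :: "real^'m^'k"
  assumes "pure_rows V" "nonneg_mat (V ** A)"
  shows "nonneg_mat A"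
  unfolding nonneg_mat_def
proof (intro allI)
  fix k j
  obtain i where i: "V $ i $ k > 0" "\<forall>j. j \<noteq> k \<longrightarrow> V $ i $ j = 0"
    using assms(1) unfolding pure_rows_def by blast
  have "V $ i $ k * A $ k $ j \<ge> 0"
    using assms(2) matrix_mult_entry_pure_row[OF i(2)] by (metis nonneg_mat_def)
  with i(1) show "A $ k $ j \<ge> 0" by (simp add: zero_le_mult_iff)
qed

theorem proposition1:
  fixes P :: "real^'n^'n" and V Vt :: "real^'k^'n"
  assumes "transpose P = P"
    and "rank P = CARD('k)"
    and "admissible_basis P V"
    and "admissible_basis P Vt"
  shows "\<exists>Q :: real^'k^'k. permutation_matrix Q \<and> supp_mat V = supp_mat (Vt ** Q)"
proof -
  have "range ((*v) V) = range ((*v) Vt)"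
    using admissible_basis_column_space assms(2-4) by metis
  then obtain A B where A: "Vt = V ** A" and B: "V = Vt ** B"
    using matrix_factor_through_column_space by (metis order_refl)
  note pure = assms(3,4)[THEN admissible_basis_pure_rows]
  note nonneg = assms(3,4)[THEN admissible_basis_nonneg_mat]
  have A0: "nonneg_mat A" and B0: "nonneg_mat B"
    using pure_rows_mult_nonneg pure nonneg A B by metis+
  have "B ** A = mat 1" "A ** B = mat 1"
    using pure_rows_mult_eq_self pure A B by (metis matrix_mul_assoc)+
  note inverse = B0 A0 this
  define Q :: "real^'k^'k" where "Q = (\<chi> k j. if B $ k $ j \<noteq> 0 then 1 else 0)"
  have "permutation_matrix Q"
    using nonneg_inverse_row_unique_nonzero[OF inverse]
      nonneg_inverse_column_unique_nonzero[OF inverse]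
    by (auto simp: permutation_matrix_def Q_def)
  moreover have "supp_mat (Vt ** B) = supp_mat (Vt ** Q)"
    by (rule supp_mat_mult_nonneg_cong) (use nonneg B0 in \<open>auto simp: Q_def nonneg_mat_def\<close>)
  ultimately show ?thesis using B by blast
qed

end
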